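(* A dual-rail CNOT gate cannot be heralded with a single ancilla photon in the following sense. Let $N=5$, and for each $k=1,\dots,4$ let the input be the Fock state $|x_k,1\rangle$ (first four modes $x_k$, one photon in mode $5$) where $x_1=(1,0,1,0)$, $x_2=(1,0,0,1)$, $x_3=(0,1,1,0)$, $x_4=(0,1,0,1)$, and let the corresponding targets be $Q_1=a^\dagger_1a^\dagger_3$, $Q_2=a^\dagger_1a^\dagger_4$, $Q_3=a^\dagger_2a^\dagger_4$, $Q_4=a^\dagger_2a^\dagger_3$ (i.e. $|1,0,1,0\rangle\mapsto|1,0,1,0\rangle$, $|1,0,0,1\rangle\mapsto|1,0,0,1\rangle$, $|0,1,1,0\rangle\mapsto|0,1,0,1\rangle$, $|0,1,0,1\rangle\mapsto|0,1,1,0\rangle$). Then there is no complex $5\times5$ matrix $A$ and no $\gamma\in\mathbb{C}$ such that $\gamma G_k=Q_k$ for all $k=1,\dots,4$ simultaneously, where $G_k$ is the heralded polynomial for input $k$ with heralding pattern $(1)$ on mode $5$.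
   Context: Heralded linear-optical model. States with a fixed photon number are homogeneous polynomials in commuting variables $a^\dagger_1,\dots,a^\dagger_N$ applied to the vacuum. Given $N$ modes, an arbitrary complex $N\times N$ matrix $A$ (not required to be unitary), and a Fock input $\prod_{i=1}^N\frac{1}{\sqrt{n_i!}}(a^\dagger_{i,\mathrm{in}})^{n_i}|0\rangle$, the output is $F|0\rangle$ with $F=\prod_{i=1}^N\frac{1}{\sqrt{n_i!}}\big(\sum_{j=1}^N A_{i,j}a^\dagger_j\big)^{n_i}$. Heralding the last $M$ modes on the pattern $(m_1,\dots,m_M)$, $m=\sum_jm_j$, gives $G=\frac{1}{\prod_jm_j!}\,\frac{\partial^{m}F}{\partial(a^\dagger_{N-M+1})^{m_1}\cdots\partial(a^\dagger_N)^{m_M}}\Big|_{a^\dagger_{N-M+1}=\cdots=a^\dagger_N=0}$, a polynomial in $a^\dagger_1,\dots,a^\dagger_{N-M}$. A heralded gate requires a single matrix $A$ and a single common $\gamma$ to satisfy $\gamma G_k=Q_k$ for every input–output pair $k$. *)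

theory Defs
  imports "HOL-Analysis.Analysis"
begin

text \<open>Modes are indexed 0..N-1 (paper's mode i is index i-1). A state polynomial in the
commuting variables a_0,...,a_{N-1} is represented by its polynomial function
(nat => complex) => complex; over the infinite field C this is faithful.
A complex N x N matrix is a function nat => nat => complex (only entries < N are used).\<close>

definition lin_out :: "nat \<Rightarrow> (nat \<Rightarrow> nat \<Rightarrow> complex) \<Rightarrow> nat \<Rightarrow> (nat \<Rightarrow> complex) \<Rightarrow> complex" where
  "lin_out N A i a = (\<Sum>j<N. A i j * a j)"

definition out_poly :: "nat \<Rightarrow> (nat \<Rightarrow> nat \<Rightarrow> complex) \<Rightarrow> (nat \<Rightarrow> nat) \<Rightarrow> (nat \<Rightarrow> complex) \<Rightarrow> complex" where
  "out_poly N A n a = (\<Prod>i<N. (lin_out N A i a) ^ (n i) / complex_of_real (sqrt (fact (n i))))"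

definition pd :: "nat \<Rightarrow> ((nat \<Rightarrow> complex) \<Rightarrow> complex) \<Rightarrow> (nat \<Rightarrow> complex) \<Rightarrow> complex" where
  "pd j f = (\<lambda>b. deriv (\<lambda>t. f (b(j := t))) (b j))"

definition heralded :: "nat \<Rightarrow> nat \<Rightarrow> (nat \<Rightarrow> nat \<Rightarrow> complex) \<Rightarrow> (nat \<Rightarrow> nat) \<Rightarrow> (nat \<Rightarrow> nat)
    \<Rightarrow> (nat \<Rightarrow> complex) \<Rightarrow> complex" where
  "heralded N M A n m a =
     (1 / (\<Prod>j\<in>{N-M..<N}. (fact (m j) :: complex))) *
     foldr (\<lambda>j g. (pd j ^^ m j) g) [N-M..<N] (out_poly N A n)
       (\<lambda>i. if N - M \<le> i \<and> i < N then 0 else a i)"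

definition cnot_in :: "nat \<Rightarrow> nat \<Rightarrow> nat" where
  "cnot_in k i = ([[1,0,1,0,1],[1,0,0,1,1],[0,1,1,0,1],[0,1,0,1,1]] ! k) ! i"

definition cnot_target :: "nat \<Rightarrow> (nat \<Rightarrow> complex) \<Rightarrow> complex" where
  "cnot_target k a = [a 0 * a 2, a 0 * a 3, a 1 * a 3, a 1 * a 2] ! k"

end

theory Submission
  imports Defs
begin

text \<open>Heralding the single ancilla photon in mode 5 differentiates the cubic output polynomial
once in the herald variable.  Writing \<open>u\<^sub>i\<close> for the i-th output linear form with the herald
variable set to zero and \<open>w = u\<^sub>5\<close>, the heralded output for photons in modes p, q is therefore
\<open>B(x\<^sub>p, x\<^sub>q)\<close>, where \<open>x\<^sub>i = (A\<^sub>i\<^sub>5, u\<^sub>i)\<close> and B is the symmetric bilinear form with Gram matrix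
\<open>[[0, w], [w, A\<^sub>5\<^sub>5]]\<close>.  For the CNOT targets \<open>Q\<^sub>1 Q\<^sub>4 - Q\<^sub>2 Q\<^sub>3 = a\<^sub>1 a\<^sub>2 (a\<^sub>3\<^sup>2 - a\<^sub>4\<^sup>2)\<close>,
whereas by Cauchy-Binet the corresponding combination of the \<open>G\<^sub>k\<close> is \<open>-w\<^sup>2\<close> times a product of
two linear forms.  The right-hand side is squarefree, so it cannot be divisible by the square
of the linear form w: on a suitable line the left-hand side has a double root and the
right-hand side does not.\<close>

definition lin_form :: "nat \<Rightarrow> (nat \<Rightarrow> complex) \<Rightarrow> (nat \<Rightarrow> complex) \<Rightarrow> complex" where
  "lin_form n c a = (\<Sum>j<n. c j * a j)"

lemma lin_out_eq_lin_form: "lin_out N A i = lin_form N (A i)"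
  by (simp add: fun_eq_iff lin_out_def lin_form_def)

lemma lin_form_upd:
  assumes "i < n"
  shows "lin_form n c (a(i := x)) = lin_form n c a + c i * (x - a i)"
proof -
  have "lin_form n c (a(i := x)) = (\<Sum>j<n. c j * a j + (if j = i then c i * (x - a i) else 0))"
    unfolding lin_form_def by (intro sum.cong) (auto simp: algebra_simps)
  also have "\<dots> = lin_form n c a + c i * (x - a i)"
    using assms by (simp add: lin_form_def sum.distrib)
  finally show ?thesis .
qed

lemma lin_form_upd_last: "lin_form (Suc n) c (a(n := t)) = lin_form n c a + c n * t"
proof -
  have "lin_form n c (a(n := t)) = lin_form n c a"
    unfolding lin_form_def by (intro sum.cong) auto
  then show ?thesis by (simp add: lin_form_def)
qed

lemma lin_form_diff:
  "lin_form n (\<lambda>j. s * c j - t * d j) a = s * lin_form n c a - t * lin_form n d a"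
  by (simp add: lin_form_def sum_subtractf sum_distrib_left algebra_simps)

lemma deriv_zero_at_double_root:
  fixes f h :: "'a::real_normed_field \<Rightarrow> 'a"
  assumes f: "\<And>x. f x = (x - c)\<^sup>2 * h x" and h: "h field_differentiable at c"
  shows "deriv f c = 0"
proof -
  from h obtain h' where "(h has_field_derivative h') (at c)"
    by (auto simp: field_differentiable_def)
  then have "((\<lambda>x. (x - c)\<^sup>2 * h x) has_field_derivative 0) (at c)"
    by (auto intro!: derivative_eq_intros)
  moreover have "f = (\<lambda>x. (x - c)\<^sup>2 * h x)"
    using f by auto
  ultimately show ?thesis
    by (simp add: DERIV_imp_deriv)
qed

lemma square_factor_double_root_on_line:
  fixes K :: complex and b p q v :: "nat \<Rightarrow> complex"
  assumes T: "\<And>a. K * (lin_form n b a)\<^sup>2 * lin_form n p a * lin_form n q a = T a"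
    and "i < n" and "b i \<noteq> 0"
  shows "\<exists>c. T (v(i := c)) = 0 \<and> deriv (\<lambda>x. T (v(i := x))) c = 0"
proof (intro exI conjI)
  define c where "c = v i - lin_form n b v / b i"
  define h where "h x = K * (b i)\<^sup>2 * (lin_form n p v + p i * (x - v i)) * (lin_form n q v + q i * (x - v i))"
    for x
  have "lin_form n b (v(i := x)) = b i * (x - c)" for x
    using \<open>b i \<noteq> 0\<close> \<open>i < n\<close> by (simp add: lin_form_upd c_def algebra_simps)
  then have line: "T (v(i := x)) = (x - c)\<^sup>2 * h x" for x
    using T[of "v(i := x)"] \<open>i < n\<close> by (simp add: lin_form_upd h_def power_mult_distrib mult_ac)
  then show "T (v(i := c)) = 0"
    by simp
  have "h field_differentiable at c"
    unfolding h_def field_differentiable_def by (auto intro!: derivative_eq_intros)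
  with line show "deriv (\<lambda>x. T (v(i := x))) c = 0"
    by (rule deriv_zero_at_double_root)
qed

lemma not_square_times_linear_forms:
  fixes K :: complex and b p q :: "nat \<Rightarrow> complex"
  shows "\<not> (\<forall>a. K * (lin_form 4 b a)\<^sup>2 * lin_form 4 p a * lin_form 4 q a = a 0 * a 1 * ((a 2)\<^sup>2 - (a 3)\<^sup>2))"
proof
  define T :: "(nat \<Rightarrow> complex) \<Rightarrow> complex" where "T a = a 0 * a 1 * ((a 2)\<^sup>2 - (a 3)\<^sup>2)" for a
  assume T: "\<forall>a. K * (lin_form 4 b a)\<^sup>2 * lin_form 4 p a * lin_form 4 q a = a 0 * a 1 * ((a 2)\<^sup>2 - (a 3)\<^sup>2)"
  have double_root: "\<exists>c. T (v(i := c)) = 0 \<and> deriv (\<lambda>x. T (v(i := x))) c = 0"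
    if "i < 4" "b i \<noteq> 0" for i v
    using square_factor_double_root_on_line[of K 4 b p q T i v] T that unfolding T_def by blast
  consider "b 0 \<noteq> 0 \<or> b 1 \<noteq> 0" | "b 2 \<noteq> 0 \<or> b 3 \<noteq> 0" | "b 0 = 0" "b 1 = 0" "b 2 = 0" "b 3 = 0"
    by blast
  then show False
  proof cases
    case 1
    then obtain i where i: "i = 0 \<or> i = 1" "b i \<noteq> 0"
      by blast
    define v :: "nat \<Rightarrow> complex" where "v j = (if j = 3 then 0 else 1)" for j
    have "(\<lambda>x. T (v(i := x))) = (\<lambda>x. x)"
      using i(1) by (auto simp: T_def v_def)
    with double_root[of i v] i show False
      by (auto simp: DERIV_imp_deriv[OF DERIV_ident])
  next
    case 2
    then obtain i where i: "i = 2 \<or> i = 3" "b i \<noteq> 0"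
      by blast
    define s :: complex where "s = (if i = 2 then 1 else -1)"
    have line: "T ((\<lambda>_. 1)(i := x)) = s * (x\<^sup>2 - 1)" for x
      using i(1) by (auto simp: T_def s_def)
    obtain c where "s * (c\<^sup>2 - 1) = 0" "deriv (\<lambda>x. s * (x\<^sup>2 - 1)) c = 0"
      using double_root[of i "\<lambda>_. 1"] i unfolding line by fastforce
    moreover have "deriv (\<lambda>x. s * (x\<^sup>2 - 1)) c = s * (2 * c)"
      by (auto intro!: DERIV_imp_deriv derivative_eq_intros)
    moreover have "s \<noteq> 0"
      by (simp add: s_def)
    ultimately show False
      by simp
  next
    case 3
    then have "lin_form 4 b a = 0" for a
      by (simp add: lin_form_def numeral_eq_Suc)
    with T[rule_format, of "\<lambda>j. if j = 3 then 0 else 1"] show False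
      by simp
  qed
qed

definition herald_form :: "'a::comm_ring_1 \<Rightarrow> 'a \<Rightarrow> 'a \<times> 'a \<Rightarrow> 'a \<times> 'a \<Rightarrow> 'a" where
  "herald_form w \<beta> x y = w * (fst x * snd y + snd x * fst y) + \<beta> * snd x * snd y"

text \<open>Cauchy-Binet for the Gram matrix \<open>[[0, w], [w, \<beta>]]\<close> of determinant \<open>-w\<^sup>2\<close>.\<close>

lemma herald_form_gram_det:
  "herald_form w \<beta> x1 y1 * herald_form w \<beta> x2 y2 - herald_form w \<beta> x1 y2 * herald_form w \<beta> x2 y1 =
   - w\<^sup>2 * (fst x1 * snd x2 - snd x1 * fst x2) * (fst y1 * snd y2 - snd y1 * fst y2)"
  by (simp add: herald_form_def power2_eq_square algebra_simps)

lemma deriv_prod3_affine: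
  fixes x1 x2 x3 y1 y2 y3 :: "'a::real_normed_field"
  shows "deriv (\<lambda>t. (x1 + y1 * t) * (x2 + y2 * t) * (x3 + y3 * t)) 0
           = y1 * x2 * x3 + x1 * y2 * x3 + x1 * x2 * y3"
  by (rule DERIV_imp_deriv) (auto intro!: derivative_eq_intros simp: algebra_simps)

lemma heralded_one_photon_last_mode:
  "heralded (Suc n) 1 A inp (\<lambda>_. 1) a = deriv (\<lambda>t. out_poly (Suc n) A inp (a(n := t))) 0"
proof -
  have "(\<lambda>i. if Suc n - 1 \<le> i \<and> i < Suc n then 0 else a i) = a(n := 0)"
    by auto
  then show ?thesis
    by (simp add: heralded_def pd_def)
qed

definition cnot_modes :: "nat \<Rightarrow> nat \<times> nat" where
  "cnot_modes k = [(0, 2), (0, 3), (1, 2), (1, 3)] ! k"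

lemma out_poly_cnot_in:
  assumes "k < 4"
  shows "out_poly 5 A (cnot_in k) b
           = lin_out 5 A (fst (cnot_modes k)) b * lin_out 5 A (snd (cnot_modes k)) b * lin_out 5 A 4 b"
  using assms
  by (auto simp: out_poly_def cnot_in_def cnot_modes_def numeral_eq_Suc lessThan_Suc less_Suc_eq)

lemma heralded_cnot_in:
  fixes A :: "nat \<Rightarrow> nat \<Rightarrow> complex" and a :: "nat \<Rightarrow> complex"
  assumes "k < 4"
  defines "x i \<equiv> (A i 4, lin_form 4 (A i) a)"
  shows "heralded 5 1 A (cnot_in k) (\<lambda>_. 1) a
           = herald_form (lin_form 4 (A 4) a) (A 4 4) (x (fst (cnot_modes k))) (x (snd (cnot_modes k)))"
proof -
  have "heralded 5 1 A (cnot_in k) (\<lambda>_. 1) a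
          = deriv (\<lambda>t. out_poly 5 A (cnot_in k) (a(4 := t))) 0"
    using heralded_one_photon_last_mode[of 4] by (simp add: numeral_eq_Suc)
  also have "\<dots> = deriv (\<lambda>t. (lin_form 4 (A (fst (cnot_modes k))) a + A (fst (cnot_modes k)) 4 * t)
                          * (lin_form 4 (A (snd (cnot_modes k))) a + A (snd (cnot_modes k)) 4 * t)
                          * (lin_form 4 (A 4) a + A 4 4 * t)) 0"
    using lin_form_upd_last[of 4] by (simp add: out_poly_cnot_in[OF assms(1)] lin_out_eq_lin_form)
  also have "\<dots> = herald_form (lin_form 4 (A 4) a) (A 4 4) (x (fst (cnot_modes k))) (x (snd (cnot_modes k)))"
    unfolding deriv_prod3_affine by (simp add: herald_form_def x_def algebra_simps)
  finally show ?thesis .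
qed

lemma cnot_gate_square_factor:
  fixes A :: "nat \<Rightarrow> nat \<Rightarrow> complex" and \<gamma> :: complex
  assumes gate: "\<forall>k < 4. \<forall>a. \<gamma> * heralded 5 1 A (cnot_in k) (\<lambda>_. 1) a = cnot_target k a"
  shows "- \<gamma>\<^sup>2 * (lin_form 4 (A 4) a)\<^sup>2
           * lin_form 4 (\<lambda>j. A 0 4 * A 1 j - A 1 4 * A 0 j) a
           * lin_form 4 (\<lambda>j. A 2 4 * A 3 j - A 3 4 * A 2 j) a
         = a 0 * a 1 * ((a 2)\<^sup>2 - (a 3)\<^sup>2)"
proof -
  define x where "x i = (A i 4, lin_form 4 (A i) a)" for i
  define B where "B = herald_form (lin_form 4 (A 4) a) (A 4 4)"
  have G: "\<gamma> * B (x (fst (cnot_modes k))) (x (snd (cnot_modes k))) = cnot_target k a" if "k < 4" for k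
    using gate[rule_format, OF that, of a] unfolding heralded_cnot_in[OF that] by (simp add: B_def x_def)
  have "a 0 * a 1 * ((a 2)\<^sup>2 - (a 3)\<^sup>2)
          = cnot_target 0 a * cnot_target 3 a - cnot_target 1 a * cnot_target 2 a"
    by (simp add: cnot_target_def power2_eq_square algebra_simps)
  also have "\<dots> = (\<gamma> * B (x 0) (x 2)) * (\<gamma> * B (x 1) (x 3)) - (\<gamma> * B (x 0) (x 3)) * (\<gamma> * B (x 1) (x 2))"
    using G[of 0] G[of 1] G[of 2] G[of 3] by (simp add: cnot_modes_def)
  also have "\<dots> = \<gamma>\<^sup>2 * (B (x 0) (x 2) * B (x 1) (x 3) - B (x 0) (x 3) * B (x 1) (x 2))"
    by (simp add: power2_eq_square algebra_simps)
  also have "\<dots> = - \<gamma>\<^sup>2 * (lin_form 4 (A 4) a)\<^sup>2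
                   * lin_form 4 (\<lambda>j. A 0 4 * A 1 j - A 1 4 * A 0 j) a
                   * lin_form 4 (\<lambda>j. A 2 4 * A 3 j - A 3 4 * A 2 j) a"
    unfolding B_def herald_form_gram_det lin_form_diff by (simp add: x_def algebra_simps)
  finally show ?thesis ..
qed

theorem mainTheorem5:
  shows "\<not> (\<exists>(A :: nat \<Rightarrow> nat \<Rightarrow> complex) (\<gamma> :: complex).
            \<forall>k < 4. \<forall>a :: nat \<Rightarrow> complex.
              \<gamma> * heralded 5 1 A (cnot_in k) (\<lambda>_. 1) a = cnot_target k a)"
proof
  assume "\<exists>(A :: nat \<Rightarrow> nat \<Rightarrow> complex) (\<gamma> :: complex).
            \<forall>k < 4. \<forall>a :: nat \<Rightarrow> complex.
              \<gamma> * heralded 5 1 A (cnot_in k) (\<lambda>_. 1) a = cnot_target k a"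
  then obtain A and \<gamma> :: complex
    where gate: "\<forall>k < 4. \<forall>a. \<gamma> * heralded 5 1 A (cnot_in k) (\<lambda>_. 1) a = cnot_target k a"
    by blast
  show False
    using cnot_gate_square_factor[OF gate] not_square_times_linear_forms by blast
qed

end
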